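(* Let $L\ge 2$ be an integer. For $\theta_1,\dots,\theta_L\in[0,2\pi)$, let $\theta_{(1)}\le\dots\le\theta_{(L)}$ be their sorted values, and let $\angle_k=\theta_{(k+1)}-\theta_{(k)}$ for $1\le k<L$, $\angle_L=2\pi-(\theta_{(L)}-\theta_{(1)})$. Define $$D(\theta_1,\dots,\theta_L)=\sum_{i=1}^{L-1}\sum_{j=i+1}^{L}\sin^2\Big(\sum_{k=i}^{j-1}\angle_k\Big).$$ Then the maximum of $D$ over all $(\theta_1,\dots,\theta_L)\in[0,2\pi)^L$ exists and equals $L^2/4$. *)

theory Defs
  imports Complex_Main
begin

definition sorted_ang :: "real list \<Rightarrow> nat \<Rightarrow> real" where
  "sorted_ang th k = sort th ! (k - 1)"

definition gap_ang :: "real list \<Rightarrow> nat \<Rightarrow> real" where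
  "gap_ang th k =
     (if k < length th then sorted_ang th (k + 1) - sorted_ang th k
      else 2 * pi - (sorted_ang th (length th) - sorted_ang th 1))"

definition Dfun :: "real list \<Rightarrow> real" where
  "Dfun th = (\<Sum>i = 1..length th - 1. \<Sum>j = i + 1..length th.
                 (sin (\<Sum>k = i..j - 1. gap_ang th k))\<^sup>2)"

end

theory Submission
  imports Defs "HOL-Library.Multiset"
begin

text \<open>The gaps telescope, so D is the sum of sin(theta_j - theta_i)^2 over all pairs of
  angles. Since sin(a - b)^2 = (1 - cos 2a cos 2b - sin 2a sin 2b)/2, this pair sum equals
  L^2/4 - |sum_i exp(2 i theta_i)|^2/4. Hence D <= L^2/4, with equality as soon as the unit
  vectors exp(2 i theta) cancel; pairs {0, pi/2} together with at most one triple
  {0, pi/3, 2 pi/3} achieve this for every L >= 2.\<close>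

lemma sin_diff_power2:
  fixes x y :: real
  shows "(sin (x - y))\<^sup>2 = 1/2 - (cos (2*x) * cos (2*y) + sin (2*x) * sin (2*y)) / 2"
proof -
  have "(sin (x - y))\<^sup>2 = (1 - cos (2*x - 2*y)) / 2"
    using cos_double_sin[of "x - y"] by (simp add: algebra_simps)
  then show ?thesis by (simp add: cos_diff diff_divide_distrib)
qed

lemma sum_pairs_sin_diff_power2:
  fixes b :: "nat \<Rightarrow> real"
  shows "(\<Sum>i=1..n. \<Sum>j=i+1..n. (sin (b j - b i))\<^sup>2) =
    real n ^ 2 / 4 - ((\<Sum>i=1..n. cos (2 * b i))\<^sup>2 + (\<Sum>i=1..n. sin (2 * b i))\<^sup>2) / 4"
proof (induction n)
  case 0
  then show ?case by simp
next
  case (Suc n)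
  define C where "C = (\<Sum>i=1..n. cos (2 * b i))"
  define S where "S = (\<Sum>i=1..n. sin (2 * b i))"
  define c where "c = cos (2 * b (Suc n))"
  define s where "s = sin (2 * b (Suc n))"
  have new_pairs: "(\<Sum>i=1..n. (sin (b (Suc n) - b i))\<^sup>2) = real n / 2 - (c * C + s * S) / 2"
    by (simp add: sin_diff_power2 c_def s_def C_def S_def sum_subtractf sum.distrib
        sum_divide_distrib[symmetric] sum_distrib_left)
  have "(\<Sum>i=1..Suc n. \<Sum>j=i+1..Suc n. (sin (b j - b i))\<^sup>2)
      = (\<Sum>i=1..n. \<Sum>j=i+1..n. (sin (b j - b i))\<^sup>2) + (\<Sum>i=1..n. (sin (b (Suc n) - b i))\<^sup>2)"
    by (simp add: sum.cl_ivl_Suc sum.distrib)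
  also have "\<dots> = real n ^ 2 / 4 - (C\<^sup>2 + S\<^sup>2) / 4 + (real n / 2 - (c * C + s * S) / 2)"
    unfolding new_pairs Suc.IH C_def S_def ..
  also have "\<dots> = real (Suc n) ^ 2 / 4 - ((C + c)\<^sup>2 + (S + s)\<^sup>2) / 4"
    using sin_cos_squared_add[of "2 * b (Suc n)"]
    by (simp add: c_def s_def power2_eq_square field_simps)
  finally show ?case by (simp add: C_def S_def c_def s_def)
qed

lemma sum_gap_ang:
  assumes "1 \<le> i" "i + d + 1 \<le> length th"
  shows "(\<Sum>k=i..i+d. gap_ang th k) = sorted_ang th (i + d + 1) - sorted_ang th i"
  using assms by (induction d) (simp_all add: gap_ang_def)

lemma Dfun_eq_sum_pairs_sorted:
  assumes "length th \<ge> 1"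
  shows "Dfun th = (\<Sum>i=1..length th. \<Sum>j=i+1..length th.
                      (sin (sorted_ang th j - sorted_ang th i))\<^sup>2)"
proof -
  let ?L = "length th"
  have "Dfun th = (\<Sum>i=1..?L - 1. \<Sum>j=i+1..?L. (sin (sorted_ang th j - sorted_ang th i))\<^sup>2)"
    unfolding Dfun_def
  proof (intro sum.cong refl)
    fix i j assume i: "i \<in> {1..?L - 1}" and j: "j \<in> {i+1..?L}"
    have "(\<Sum>k=i..j-1. gap_ang th k) = (\<Sum>k=i..i+(j-1-i). gap_ang th k)" using j by simp
    also have "\<dots> = sorted_ang th j - sorted_ang th i"
      using i j sum_gap_ang[of i "j-1-i" th] by simp
    finally show "(sin (\<Sum>k=i..j-1. gap_ang th k))\<^sup>2 = (sin (sorted_ang th j - sorted_ang th i))\<^sup>2"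
      by simp
  qed
  also have "\<dots> = (\<Sum>i=1..?L. \<Sum>j=i+1..?L. (sin (sorted_ang th j - sorted_ang th i))\<^sup>2)"
  proof -
    have "{1..?L} = insert ?L {1..?L - 1}" "?L \<notin> {1..?L - 1}" using assms by auto
    then show ?thesis by simp
  qed
  finally show ?thesis .
qed

lemma sum_sorted_ang: "(\<Sum>i=1..length th. f (sorted_ang th i)) = sum_list (map f th)"
proof -
  have "(\<Sum>i=1..length th. f (sorted_ang th i)) = sum_list (map f (sort th))"
    unfolding sorted_ang_def
    by (simp add: sum.atLeast1_atMost_eq atLeast0LessThan sum_list_sum_nth)
  also have "\<dots> = sum_list (map f th)"
    by (metis mset_map mset_sort sum_mset_sum_list)
  finally show ?thesis .
qed

lemma Dfun_eq_resultant:
  assumes "length th \<ge> 1"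
  shows "Dfun th = real (length th) ^ 2 / 4 -
    ((sum_list (map (\<lambda>x. cos (2*x)) th))\<^sup>2 + (sum_list (map (\<lambda>x. sin (2*x)) th))\<^sup>2) / 4"
  using Dfun_eq_sum_pairs_sorted[OF assms] sum_pairs_sin_diff_power2[of "sorted_ang th" "length th"]
    sum_sorted_ang[of "\<lambda>x. cos (2*x)" th] sum_sorted_ang[of "\<lambda>x. sin (2*x)" th]
  by simp

lemma exists_balanced_angles:
  fixes L :: nat
  assumes "L \<ge> 2"
  shows "\<exists>th. length th = L \<and> set th \<subseteq> {0..<2 * pi} \<and>
    sum_list (map (\<lambda>x. cos (2*x)) th) = 0 \<and> sum_list (map (\<lambda>x. sin (2*x)) th) = 0"
proof -
  define pairs where "pairs m = replicate m 0 @ replicate m (pi/2)" for m :: nat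
  define triple where "triple = [0, pi/3, 2*pi/3]"
  have pairs_length: "length (pairs m) = 2 * m" for m by (simp add: pairs_def)
  have pairs_range: "set (pairs m) \<subseteq> {0..<2 * pi}" for m
  proof -
    have "set (pairs m) \<subseteq> {0, pi/2}" by (auto simp: pairs_def)
    also have "\<dots> \<subseteq> {0..<2 * pi}" using pi_gt_zero by auto
    finally show ?thesis .
  qed
  have pairs_balanced: "sum_list (map (\<lambda>x. cos (2*x)) (pairs m)) = 0"
    "sum_list (map (\<lambda>x. sin (2*x)) (pairs m)) = 0" for m
    by (simp_all add: pairs_def sum_list_replicate)
  have "4*pi/3 = pi/3 + pi" by simp
  then have "cos (4*pi/3) = -1/2" "sin (4*pi/3) = - sqrt 3 / 2"
    by (simp_all only: cos_periodic_pi sin_periodic_pi cos_60 sin_60)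
  moreover have "cos (2*pi/3) = -1/2" "sin (2*pi/3) = sqrt 3 / 2"
    using cos_120 sin_120 by simp_all
  ultimately have triple_balanced: "sum_list (map (\<lambda>x. cos (2*x)) triple) = 0"
    "sum_list (map (\<lambda>x. sin (2*x)) triple) = 0"
    by (simp_all add: triple_def)
  have triple_range: "set triple \<subseteq> {0..<2 * pi}"
    using pi_gt_zero by (auto simp: triple_def)
  show ?thesis
  proof (cases "even L")
    case True
    then show ?thesis
      using pairs_length[of "L div 2"] pairs_range pairs_balanced by (metis dvd_mult_div_cancel)
  next
    case False
    then have "length (triple @ pairs (L div 2 - 1)) = L"
      using assms by (simp add: triple_def pairs_length) presburger
    then show ?thesis
      using pairs_range triple_range pairs_balanced triple_balanced
      by (intro exI[of _ "triple @ pairs (L div 2 - 1)"]) auto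
  qed
qed

theorem lemma2:
  fixes L :: nat
  assumes "L \<ge> 2"
  shows "(\<exists>th. length th = L \<and> set th \<subseteq> {0..<2 * pi} \<and> Dfun th = real L ^ 2 / 4) \<and>
         (\<forall>th. length th = L \<and> set th \<subseteq> {0..<2 * pi} \<longrightarrow> Dfun th \<le> real L ^ 2 / 4)"
proof
  show "\<exists>th. length th = L \<and> set th \<subseteq> {0..<2 * pi} \<and> Dfun th = real L ^ 2 / 4"
    using exists_balanced_angles[OF assms] Dfun_eq_resultant assms by fastforce
  show "\<forall>th. length th = L \<and> set th \<subseteq> {0..<2 * pi} \<longrightarrow> Dfun th \<le> real L ^ 2 / 4"
    using Dfun_eq_resultant assms by (simp add: add_nonneg_nonneg)
qed

end
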